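(* Assume $b$ satisfies condition (Cb) for some $\rho\in\mathscr U$ and let $\ell\in\mathbb S^d$. Let $\phi$ be a nonnegative $C^\infty$ function on $\mathbb R^d$ supported in the unit ball with $\int\phi=1$, $\phi_\varepsilon(x):=\varepsilon^{-d}\phi(x/\varepsilon)$, and $b_\varepsilon:=b*\phi_\varepsilon$ for $\varepsilon\in(0,1)$. Then each $b_\varepsilon$ satisfies (Cb) with the same $\rho$, and if $X^\varepsilon_t$ and $X^\ell_t$ solve $X^\varepsilon_t=x_0+\int_0^tb_\varepsilon(X^\varepsilon_s)ds+W_{\ell(t)}$ and $X^\ell_t=x_0+\int_0^tb(X^\ell_s)ds+W_{\ell(t)}$ (driven by the same $W$), then for every $\omega$ and every $t\ge0$, $\lim_{\varepsilon\downarrow0}|X^\varepsilon_t(\omega)-X^\ell_t(\omega)|=0$.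
   Context: Notation: $\|x\|_1:=\sum_j|x_j|$. $\mathscr U$ is the set of continuous non-decreasing functions $\rho:(0,\infty)\to(0,\infty)$ with at most linear growth such that $\int_{0+}\frac{1}{\rho(s)}\,ds=+\infty$. Condition (Cb): $b:\mathbb R^d\to\mathbb R^d$ is continuous and $(x_j-y_j)(b_j(x)-b_j(y))\le|x_j-y_j|\rho(\|x-y\|_1)$ for all $x,y\in\mathbb R^d$, $j=1,\dots,d$. $\mathbb S^d$ is the set of càdlàg $\ell=(\ell_1,\dots,\ell_d):[0,\infty)\to[0,\infty)^d$ with each $\ell_j$ non-decreasing and $\ell_j(0)=0$. $W$ is a standard $d$-dimensional Brownian motion and $W_{\ell(t)}:=(W^1_{\ell_1(t)},\dots,W^d_{\ell_d(t)})$. *)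

theory Defs
  imports "HOL-Analysis.Analysis" "HOL-Probability.Probability"
begin

definition l1norm :: "real^'d \<Rightarrow> real" where
  "l1norm x = (\<Sum>j\<in>UNIV. \<bar>x $ j\<bar>)"

definition osgood_class :: "(real \<Rightarrow> real) \<Rightarrow> bool" where
  "osgood_class \<rho> \<longleftrightarrow>
     continuous_on {0<..} \<rho> \<and> mono_on {0<..} \<rho> \<and> (\<forall>s>0. \<rho> s > 0) \<and>
     (\<exists>C. \<forall>s>0. \<rho> s \<le> C * (1 + s)) \<and>
     filterlim (\<lambda>e. integral {e..1} (\<lambda>s. 1 / \<rho> s)) at_top (at_right 0)"

definition cond_Cb :: "(real \<Rightarrow> real) \<Rightarrow> (real^'d \<Rightarrow> real^'d) \<Rightarrow> bool" where
  "cond_Cb \<rho> b \<longleftrightarrow> continuous_on UNIV b \<and>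
     (\<forall>x y j. (x $ j - y $ j) * (b x $ j - b y $ j) \<le> \<bar>x $ j - y $ j\<bar> * \<rho> (l1norm (x - y)))"

definition subord_paths :: "(real \<Rightarrow> real^'d) set" where
  "subord_paths = {l. l 0 = 0 \<and> (\<forall>t\<ge>0. \<forall>j. l t $ j \<ge> 0) \<and>
     (\<forall>j. mono_on {0..} (\<lambda>t. l t $ j)) \<and>
     (\<forall>t\<ge>0. continuous (at_right t) l) \<and>
     (\<forall>t>0. \<exists>L. (l \<longlongrightarrow> L) (at_left t))}"

definition std_brownian_motion :: "'w measure \<Rightarrow> ('w \<Rightarrow> real \<Rightarrow> real^'d) \<Rightarrow> bool" where
  "std_brownian_motion M W \<longleftrightarrow> prob_space M \<and>
     (\<forall>t\<ge>0. (\<lambda>\<omega>. W \<omega> t) \<in> borel_measurable M) \<and>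
     (\<forall>\<omega>\<in>space M. W \<omega> 0 = 0 \<and> continuous_on {0..} (W \<omega>)) \<and>
     (\<forall>ts :: real list. sorted ts \<and> (\<forall>t\<in>set ts. t \<ge> 0) \<longrightarrow>
        prob_space.indep_vars M (\<lambda>_. borel)
          (\<lambda>i \<omega>. W \<omega> (ts ! Suc i) - W \<omega> (ts ! i)) {..<length ts - 1}) \<and>
     (\<forall>s t. 0 \<le> s \<and> s < t \<longrightarrow>
        prob_space.indep_vars M (\<lambda>_. borel) (\<lambda>j \<omega>. (W \<omega> t - W \<omega> s) $ j) UNIV \<and>
        (\<forall>j. distributed M lborel (\<lambda>\<omega>. (W \<omega> t - W \<omega> s) $ j)
                (\<lambda>x. ennreal (normal_density 0 (sqrt (t - s)) x))))"

text \<open>Time-changed Brownian motion W_{l(t)} = (W^1_{l_1(t)},...,W^d_{l_d(t)}).\<close>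
definition time_changed :: "('w \<Rightarrow> real \<Rightarrow> real^'d) \<Rightarrow> (real \<Rightarrow> real^'d) \<Rightarrow> 'w \<Rightarrow> real \<Rightarrow> real^'d" where
  "time_changed W l \<omega> t = (\<chi> j. W \<omega> (l t $ j) $ j)"

text \<open>C-infinity: continuous partial derivatives of all orders exist.
  D js is the iterated partial derivative along the directions in js.\<close>
definition smooth_fun :: "(real^'d \<Rightarrow> real) \<Rightarrow> bool" where
  "smooth_fun f \<longleftrightarrow> (\<exists>D :: 'd list \<Rightarrow> real^'d \<Rightarrow> real. D [] = f \<and>
     (\<forall>js. continuous_on UNIV (D js)) \<and>
     (\<forall>js j x. ((\<lambda>h. D js (x + h *\<^sub>R axis j 1)) has_real_derivative D (j # js) x) (at 0)))"

definition mollifier :: "(real^'d \<Rightarrow> real) \<Rightarrow> real \<Rightarrow> real^'d \<Rightarrow> real" where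
  "mollifier \<phi> \<epsilon> x = inverse \<epsilon> ^ CARD('d) * \<phi> (inverse \<epsilon> *\<^sub>R x)"

definition mollify :: "(real^'d \<Rightarrow> real^'d) \<Rightarrow> (real^'d \<Rightarrow> real) \<Rightarrow> real \<Rightarrow> real^'d \<Rightarrow> real^'d" where
  "mollify b \<phi> \<epsilon> x = integral UNIV (\<lambda>y. mollifier \<phi> \<epsilon> y *\<^sub>R b (x - y))"

end

theory Submission
  imports Defs
begin

text \<open>Convolution with a nonnegative kernel of mass one averages the inequality (Cb) over
translates, so each b\<epsilon> satisfies (Cb) with the same \<rho>.
The difference Z = X\<epsilon> - X\<ell> is continuous, vanishes at 0 and has right derivative
(b\<epsilon> - b)(X\<epsilon>) + (b(X\<epsilon>) - b(X\<ell>)). For the smoothed l1 norm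
v = \<Sum>j sqrt(Z_j^2 + \<gamma>^2), condition (Cb) and monotonicity of \<rho> give
v' \<le> d (\<rho>(v) + c) as long as |Z|1 < \<eta>, where c bounds b\<epsilon> - b uniformly on a ball
containing the paths. Hence the integral of 1/(d (\<rho> + c)) from d\<gamma> to v(t) is at most t.
Choosing a = d\<gamma> with the integral of 1/\<rho> over [a, \<eta>] larger than 2dt (possible by the
Osgood condition) and then \<epsilon> so small that c \<le> \<rho>(a), this forces |Z(t)|1 < \<eta>.\<close>

section \<open>Mollification\<close>

lemma mem_cbox_of_norm_le:
  fixes x :: "'a::euclidean_space"
  assumes "norm x \<le> r"
  shows "x \<in> cbox (-(r *\<^sub>R One)) (r *\<^sub>R One)"
  unfolding mem_box
proof (intro ballI conjI)
  fix i :: 'a assume i: "i \<in> Basis"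
  have "One \<bullet> i = 1" using i by (simp add: inner_sum_left inner_Basis)
  moreover have "\<bar>x \<bullet> i\<bar> \<le> r" using Basis_le_norm[OF i, of x] assms by linarith
  ultimately show "(- (r *\<^sub>R One)) \<bullet> i \<le> x \<bullet> i" "x \<bullet> i \<le> (r *\<^sub>R One) \<bullet> i"
    by (auto simp: abs_le_iff)
qed

definition mollifier_kernel :: "(real^'d \<Rightarrow> real) \<Rightarrow> bool" where
  "mollifier_kernel \<phi> \<longleftrightarrow> continuous_on UNIV \<phi> \<and> (\<forall>x. \<phi> x \<ge> 0) \<and>
     (\<forall>x. norm x > 1 \<longrightarrow> \<phi> x = 0) \<and> (\<phi> has_integral 1) UNIV"

lemma mollifier_eq_0:
  assumes "mollifier_kernel \<phi>" "\<epsilon> > 0" "norm y > \<epsilon>"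
  shows "mollifier \<phi> \<epsilon> y = 0"
proof -
  have "norm (inverse \<epsilon> *\<^sub>R y) > 1" using assms(2,3) by (simp add: field_simps)
  thus ?thesis using assms(1) unfolding mollifier_def mollifier_kernel_def by simp
qed

lemma mollifier_nonneg: "mollifier_kernel \<phi> \<Longrightarrow> \<epsilon> > 0 \<Longrightarrow> mollifier \<phi> \<epsilon> y \<ge> 0"
  unfolding mollifier_kernel_def mollifier_def by simp

lemma continuous_on_mollifier: "mollifier_kernel \<phi> \<Longrightarrow> continuous_on UNIV (mollifier \<phi> \<epsilon>)"
  unfolding mollifier_kernel_def mollifier_def
  by (auto intro!: continuous_intros elim: continuous_on_compose2)

lemma mollifier_has_integral_1:
  fixes \<phi> :: "real^'d \<Rightarrow> real"
  assumes \<phi>: "mollifier_kernel \<phi>" and \<epsilon>: "\<epsilon> > 0"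
  shows "(mollifier \<phi> \<epsilon> has_integral 1) UNIV"
proof -
  let ?box = "\<lambda>r::real. cbox (-(r *\<^sub>R One)) (r *\<^sub>R One :: real^'d)"
  have supp: "\<And>x. norm x > 1 \<Longrightarrow> \<phi> x = 0" and int: "(\<phi> has_integral 1) UNIV"
    using \<phi> by (auto simp: mollifier_kernel_def)
  have "(\<lambda>x. if x \<in> ?box 1 then \<phi> x else 0) = \<phi>"
    using mem_cbox_of_norm_le[of _ 1] supp by (force simp: not_le)
  hence "(\<phi> has_integral 1) (?box 1)"
    using int has_integral_restrict_UNIV[of "?box 1" \<phi> 1] by simp
  from has_integral_affinity'[OF this, of "inverse \<epsilon>" 0]
  have "((\<lambda>x. \<phi> (inverse \<epsilon> *\<^sub>R x)) has_integral (1 /\<^sub>R inverse \<epsilon> ^ CARD('d)))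
          (cbox ((-(1 *\<^sub>R One) - 0) /\<^sub>R inverse \<epsilon>) ((1 *\<^sub>R One - 0) /\<^sub>R inverse \<epsilon>))"
    using \<epsilon> by simp
  from has_integral_mult_right[OF this, of "inverse \<epsilon> ^ CARD('d)"]
  have "(mollifier \<phi> \<epsilon> has_integral 1) (?box \<epsilon>)"
    unfolding mollifier_def using \<epsilon> by (simp add: field_simps)
  thus ?thesis
  proof (rule has_integral_on_superset)
    fix x assume "x \<notin> ?box \<epsilon>"
    hence "norm x > \<epsilon>" using mem_cbox_of_norm_le[of x \<epsilon>] by (meson not_le)
    thus "mollifier \<phi> \<epsilon> x = 0" by (rule mollifier_eq_0[OF \<phi> \<epsilon>])
  qed simp
qed

lemma integrable_mollifier_scaleR:
  fixes g :: "real^'d \<Rightarrow> 'b::euclidean_space"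
  assumes \<phi>: "mollifier_kernel \<phi>" and \<epsilon>: "\<epsilon> > 0" and g: "continuous_on UNIV g"
  shows "(\<lambda>z. mollifier \<phi> \<epsilon> z *\<^sub>R g z) integrable_on UNIV"
proof (rule integrable_on_superset)
  show "(\<lambda>z. mollifier \<phi> \<epsilon> z *\<^sub>R g z) integrable_on cbox (-(\<epsilon> *\<^sub>R One)) (\<epsilon> *\<^sub>R One)"
    by (intro integrable_continuous continuous_on_subset[OF continuous_on_scaleR[OF continuous_on_mollifier[OF \<phi>] g]])
       simp
  fix x :: "real^'d" assume "x \<notin> cbox (-(\<epsilon> *\<^sub>R One)) (\<epsilon> *\<^sub>R One)"
  hence "norm x > \<epsilon>" using mem_cbox_of_norm_le[of x \<epsilon>] by (meson not_le)
  thus "mollifier \<phi> \<epsilon> x *\<^sub>R g x = 0" using mollifier_eq_0[OF \<phi> \<epsilon>] by simp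
qed simp

lemma norm_integral_mollifier_scaleR_le:
  fixes g :: "real^'d \<Rightarrow> 'b::euclidean_space"
  assumes \<phi>: "mollifier_kernel \<phi>" and \<epsilon>: "\<epsilon> > 0" and g: "continuous_on UNIV g"
    and bound: "\<And>z. norm z \<le> \<epsilon> \<Longrightarrow> norm (g z) \<le> \<kappa>"
  shows "norm (integral UNIV (\<lambda>z. mollifier \<phi> \<epsilon> z *\<^sub>R g z)) \<le> \<kappa>"
proof -
  have mass: "((\<lambda>z. mollifier \<phi> \<epsilon> z * \<kappa>) has_integral \<kappa>) UNIV"
    using has_integral_mult_left[OF mollifier_has_integral_1[OF \<phi> \<epsilon>], of \<kappa>] by simp
  have "norm (integral UNIV (\<lambda>z. mollifier \<phi> \<epsilon> z *\<^sub>R g z)) \<le> integral UNIV (\<lambda>z. mollifier \<phi> \<epsilon> z * \<kappa>)"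
  proof (rule integral_norm_bound_integral)
    fix z :: "real^'d"
    show "norm (mollifier \<phi> \<epsilon> z *\<^sub>R g z) \<le> mollifier \<phi> \<epsilon> z * \<kappa>"
      using bound[of z] mollifier_nonneg[OF \<phi> \<epsilon>, of z] mollifier_eq_0[OF \<phi> \<epsilon>, of z]
      by (cases "norm z \<le> \<epsilon>") (auto simp: mult_left_mono)
  qed (use integrable_mollifier_scaleR[OF \<phi> \<epsilon> g] mass in blast)+
  thus ?thesis by (simp only: integral_unique[OF mass])
qed

lemma integral_mollifier_scaleR_diff:
  fixes g h :: "real^'d \<Rightarrow> 'b::euclidean_space"
  assumes \<phi>: "mollifier_kernel \<phi>" and \<epsilon>: "\<epsilon> > 0"
    and g: "continuous_on UNIV g" and h: "continuous_on UNIV h"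
  shows "integral UNIV (\<lambda>z. mollifier \<phi> \<epsilon> z *\<^sub>R g z) - integral UNIV (\<lambda>z. mollifier \<phi> \<epsilon> z *\<^sub>R h z)
     = integral UNIV (\<lambda>z. mollifier \<phi> \<epsilon> z *\<^sub>R (g z - h z))"
  using integrable_mollifier_scaleR[OF \<phi> \<epsilon> g] integrable_mollifier_scaleR[OF \<phi> \<epsilon> h]
  by (simp add: integral_diff scaleR_diff_right)

lemma mollify_diff_eq:
  fixes b :: "real^'d \<Rightarrow> real^'d"
  assumes \<phi>: "mollifier_kernel \<phi>" and \<epsilon>: "\<epsilon> > 0" and b: "continuous_on UNIV b"
  shows "mollify b \<phi> \<epsilon> x - mollify b \<phi> \<epsilon> y = integral UNIV (\<lambda>z. mollifier \<phi> \<epsilon> z *\<^sub>R (b (x - z) - b (y - z)))"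
  unfolding mollify_def
  by (intro integral_mollifier_scaleR_diff[OF \<phi> \<epsilon>] continuous_on_compose2[OF b] continuous_intros) auto

lemma mollify_minus_eq:
  fixes b :: "real^'d \<Rightarrow> real^'d"
  assumes \<phi>: "mollifier_kernel \<phi>" and \<epsilon>: "\<epsilon> > 0" and b: "continuous_on UNIV b"
  shows "mollify b \<phi> \<epsilon> x - b x = integral UNIV (\<lambda>z. mollifier \<phi> \<epsilon> z *\<^sub>R (b (x - z) - b x))"
proof -
  have "integral UNIV (\<lambda>z. mollifier \<phi> \<epsilon> z *\<^sub>R b x) = b x"
    using has_integral_scaleR_left[OF mollifier_has_integral_1[OF \<phi> \<epsilon>], of "b x"]
    by (simp add: integral_unique)
  moreover have "continuous_on UNIV (\<lambda>z. b (x - z))"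
    by (intro continuous_on_compose2[OF b] continuous_intros) auto
  ultimately show ?thesis unfolding mollify_def
    using integral_mollifier_scaleR_diff[OF \<phi> \<epsilon>, of "\<lambda>z. b (x - z)" "\<lambda>z. b x"] by simp
qed

lemma continuous_on_mollify:
  fixes b :: "real^'d \<Rightarrow> real^'d"
  assumes \<phi>: "mollifier_kernel \<phi>" and \<epsilon>: "\<epsilon> > 0" and b: "continuous_on UNIV b"
  shows "continuous_on UNIV (mollify b \<phi> \<epsilon>)"
  unfolding continuous_on_iff
proof (intro ballI allI impI)
  fix x :: "real^'d" and r :: real assume r: "r > 0"
  have "uniformly_continuous_on (cball x (\<epsilon> + 1)) b"
    by (intro compact_uniformly_continuous continuous_on_subset[OF b]) auto
  then obtain d where d: "d > 0" and
    dd: "\<And>u v. u \<in> cball x (\<epsilon> + 1) \<Longrightarrow> v \<in> cball x (\<epsilon> + 1) \<Longrightarrow> dist v u < d \<Longrightarrow> dist (b v) (b u) < r / 2"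
    unfolding uniformly_continuous_on_def using r by (metis half_gt_zero)
  have "dist (mollify b \<phi> \<epsilon> x') (mollify b \<phi> \<epsilon> x) < r" if x': "dist x' x < min d 1" for x'
  proof -
    have "norm (b (x' - z) - b (x - z)) \<le> r / 2" if z: "norm z \<le> \<epsilon>" for z
    proof -
      have "norm (x - (x' - z)) \<le> norm (x - x') + norm z"
        using norm_triangle_ineq[of "x - x'" z] by (simp add: algebra_simps)
      hence "x' - z \<in> cball x (\<epsilon> + 1)" "x - z \<in> cball x (\<epsilon> + 1)"
        using z x' by (auto simp: dist_norm norm_minus_commute)
      moreover have "dist (x' - z) (x - z) < d" using x' by (simp add: dist_norm)
      ultimately show ?thesis using dd by (fastforce simp: dist_norm)
    qed
    hence "norm (mollify b \<phi> \<epsilon> x' - mollify b \<phi> \<epsilon> x) \<le> r / 2"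
      unfolding mollify_diff_eq[OF \<phi> \<epsilon> b]
      by (intro norm_integral_mollifier_scaleR_le[OF \<phi> \<epsilon>])
         (auto intro!: continuous_intros continuous_on_compose2[OF b])
    thus ?thesis using r by (simp add: dist_norm)
  qed
  thus "\<exists>d>0. \<forall>x'\<in>UNIV. dist x' x < d \<longrightarrow> dist (mollify b \<phi> \<epsilon> x') (mollify b \<phi> \<epsilon> x) < r"
    using d by (intro exI[of _ "min d 1"]) auto
qed

lemma eventually_mollify_close:
  fixes b :: "real^'d \<Rightarrow> real^'d"
  assumes \<phi>: "mollifier_kernel \<phi>" and b: "continuous_on UNIV b" and \<kappa>: "\<kappa> > 0"
  shows "\<forall>\<^sub>F \<epsilon> in at_right 0. \<forall>x. norm x \<le> R \<longrightarrow> norm (mollify b \<phi> \<epsilon> x - b x) \<le> \<kappa>"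
proof -
  have "uniformly_continuous_on (cball 0 (\<bar>R\<bar> + 1)) b"
    by (intro compact_uniformly_continuous continuous_on_subset[OF b]) auto
  then obtain d where d: "d > 0" and
    dd: "\<And>u v. u \<in> cball 0 (\<bar>R\<bar> + 1) \<Longrightarrow> v \<in> cball 0 (\<bar>R\<bar> + 1) \<Longrightarrow> dist v u < d \<Longrightarrow> dist (b v) (b u) < \<kappa>"
    unfolding uniformly_continuous_on_def using \<kappa> by metis
  have "norm (mollify b \<phi> \<epsilon> x - b x) \<le> \<kappa>" if \<epsilon>: "0 < \<epsilon>" "\<epsilon> < min d 1" and x: "norm x \<le> R" for \<epsilon> x
  proof -
    have "norm (b (x - z) - b x) \<le> \<kappa>" if z: "norm z \<le> \<epsilon>" for z
    proof -
      have "x - z \<in> cball 0 (\<bar>R\<bar> + 1)" "x \<in> cball 0 (\<bar>R\<bar> + 1)"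
        using z x \<epsilon> norm_triangle_ineq4[of x z] by auto
      moreover have "dist (x - z) x < d" using z \<epsilon> by (simp add: dist_norm)
      ultimately show ?thesis using dd by (fastforce simp: dist_norm)
    qed
    thus ?thesis unfolding mollify_minus_eq[OF \<phi> \<epsilon>(1) b]
      by (intro norm_integral_mollifier_scaleR_le[OF \<phi> \<epsilon>(1)])
         (auto intro!: continuous_intros continuous_on_compose2[OF b])
  qed
  moreover have "min d 1 > 0" using d by simp
  ultimately show ?thesis unfolding eventually_at_right_field by blast
qed

lemma cond_Cb_mollify:
  fixes b :: "real^'d \<Rightarrow> real^'d"
  assumes \<phi>: "mollifier_kernel \<phi>" and \<epsilon>: "\<epsilon> > 0" and Cb: "cond_Cb \<rho> b"
  shows "cond_Cb \<rho> (mollify b \<phi> \<epsilon>)"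
proof -
  have b: "continuous_on UNIV b" using Cb by (simp add: cond_Cb_def)
  have "(x $ j - y $ j) * (mollify b \<phi> \<epsilon> x $ j - mollify b \<phi> \<epsilon> y $ j)
      \<le> \<bar>x $ j - y $ j\<bar> * \<rho> (l1norm (x - y))" for x y j
  proof -
    define c where "c = x $ j - y $ j"
    define R where "R = \<bar>x $ j - y $ j\<bar> * \<rho> (l1norm (x - y))"
    define g where "g = (\<lambda>z. mollifier \<phi> \<epsilon> z *\<^sub>R (b (x - z) - b (y - z)))"
    have "g integrable_on UNIV" unfolding g_def
      by (intro integrable_mollifier_scaleR[OF \<phi> \<epsilon>] continuous_intros continuous_on_compose2[OF b]) auto
    from has_integral_linear[OF integrable_integral[OF this], of "\<lambda>v. c * v $ j"]
    have "((\<lambda>z. c * g z $ j) has_integral c * integral UNIV g $ j) UNIV"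
      by (simp add: o_def bounded_linear_compose[OF bounded_linear_mult_right bounded_linear_vec_nth])
    moreover have "((\<lambda>z. mollifier \<phi> \<epsilon> z * R) has_integral R) UNIV"
      using has_integral_mult_left[OF mollifier_has_integral_1[OF \<phi> \<epsilon>], of R] by simp
    moreover have "c * g z $ j \<le> mollifier \<phi> \<epsilon> z * R" for z
      \<comment> \<open>(Cb) at the translates x - z, y - z has the same left factor and the same bound\<close>
    proof -
      have "c * (b (x - z) $ j - b (y - z) $ j) \<le> R"
        using Cb[unfolded cond_Cb_def, THEN conjunct2, rule_format, of "x - z" j "y - z"]
        by (simp add: c_def R_def)
      from mult_left_mono[OF this mollifier_nonneg[OF \<phi> \<epsilon>]]
      show ?thesis by (simp add: g_def algebra_simps)
    qed
    ultimately have "c * integral UNIV g $ j \<le> R" by (rule has_integral_le)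
    moreover have "mollify b \<phi> \<epsilon> x $ j - mollify b \<phi> \<epsilon> y $ j = integral UNIV g $ j"
      using arg_cong[OF mollify_diff_eq[OF \<phi> \<epsilon> b, of x y], of "\<lambda>v. v $ j"] by (simp add: g_def)
    ultimately show ?thesis by (simp add: c_def R_def)
  qed
  thus ?thesis unfolding cond_Cb_def using continuous_on_mollify[OF \<phi> \<epsilon> b] by blast
qed

section \<open>One-sided derivative bounds\<close>

lemma increment_le_of_right_derivative_less:
  fixes h :: "real \<Rightarrow> real"
  assumes ab: "a \<le> b" and hc: "continuous_on {a..b} h"
    and hd: "\<And>s. a \<le> s \<Longrightarrow> s < b \<Longrightarrow> \<exists>D. (h has_real_derivative D) (at s within {s..b}) \<and> D < K"
  shows "h b - h a \<le> K * (b - a)"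
proof -
  define S where "S = {s \<in> {a..b}. h s - h a \<le> K * (s - a)}"
  have "closed S" unfolding S_def
    by (rule continuous_on_closed_Collect_le) (auto intro!: continuous_intros hc)
  moreover have "a \<in> S" "bdd_above S" using ab by (auto simp: S_def intro: bdd_aboveI[of _ b])
  ultimately have supS: "Sup S \<in> S" and upper: "\<And>s. s \<in> S \<Longrightarrow> s \<le> Sup S"
    by (auto intro: closed_contains_Sup cSup_upper)
  have "Sup S = b"
  proof (rule ccontr)
    define \<sigma> where "\<sigma> = Sup S"
    assume "Sup S \<noteq> b"
    hence \<sigma>: "a \<le> \<sigma>" "\<sigma> < b" using supS by (auto simp: S_def \<sigma>_def)
    then obtain D where D: "(h has_real_derivative D) (at \<sigma> within {\<sigma>..b})" "D < K"
      using hd by blast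
    have "\<forall>\<^sub>F y in at \<sigma> within {\<sigma>..b}. (h y - h \<sigma>) / (y - \<sigma>) < K"
      using D by (intro order_tendstoD(2)) (auto simp: has_field_derivative_iff)
    then obtain d where d: "d > 0"
      and dd: "\<And>y. y \<in> {\<sigma>..b} \<Longrightarrow> y \<noteq> \<sigma> \<Longrightarrow> dist y \<sigma> < d \<Longrightarrow> (h y - h \<sigma>) / (y - \<sigma>) < K"
      unfolding eventually_at by blast
    define y where "y = min (\<sigma> + d / 2) b"
    have y: "y \<in> {\<sigma>..b}" "\<sigma> < y" "dist y \<sigma> < d" using d \<sigma> by (auto simp: y_def dist_real_def)
    hence "h y - h \<sigma> < K * (y - \<sigma>)" using dd[OF y(1)] by (simp add: pos_divide_less_eq)
    moreover have "h \<sigma> - h a \<le> K * (\<sigma> - a)" using supS by (simp add: S_def \<sigma>_def)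
    ultimately have "y \<in> S" using y(1) \<sigma> by (simp add: S_def algebra_simps)
    thus False using upper y(2) by (fastforce simp: \<sigma>_def)
  qed
  thus ?thesis using supS by (simp add: S_def)
qed

lemma increment_le_of_right_derivative_le:
  fixes h :: "real \<Rightarrow> real"
  assumes ab: "a \<le> b" and hc: "continuous_on {a..b} h"
    and hd: "\<And>s. a \<le> s \<Longrightarrow> s < b \<Longrightarrow> \<exists>D. (h has_real_derivative D) (at s within {s..b}) \<and> D \<le> K"
  shows "h b - h a \<le> K * (b - a)"
proof (cases "a = b")
  case False
  hence ba: "b - a > 0" using ab by simp
  show ?thesis
  proof (rule field_le_epsilon)
    fix e :: real assume e: "e > 0"
    have "h b - h a \<le> (K + e / (b - a)) * (b - a)"
    proof (rule increment_le_of_right_derivative_less[OF ab hc])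
      fix s assume "a \<le> s" "s < b"
      with hd obtain D where "(h has_real_derivative D) (at s within {s..b})" "D \<le> K" by blast
      moreover have "0 < e / (b - a)" using e ba by simp
      ultimately show "\<exists>D. (h has_real_derivative D) (at s within {s..b}) \<and> D < K + e / (b - a)"
        by (intro exI[of _ D]) auto
    qed
    also have "\<dots> = K * (b - a) + e" using ba by (simp add: field_simps)
    finally show "h b - h a \<le> K * (b - a) + e" .
  qed
qed simp

lemma first_hitting_time:
  fixes f :: "real \<Rightarrow> real"
  assumes f: "continuous_on {0..t} f" and t: "0 \<le> t" "\<eta> \<le> f t"
  obtains \<tau> where "\<tau> \<in> {0..t}" "\<eta> \<le> f \<tau>" "\<And>s. 0 \<le> s \<Longrightarrow> s < \<tau> \<Longrightarrow> f s < \<eta>"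
proof -
  define S where "S = {s \<in> {0..t}. \<eta> \<le> f s}"
  have "closed S" unfolding S_def by (rule continuous_on_closed_Collect_le) (auto intro: f)
  moreover have "t \<in> S" "bdd_below S" using t by (auto simp: S_def intro: bdd_belowI[of _ 0])
  ultimately have "Inf S \<in> S" and "\<And>s. s \<in> S \<Longrightarrow> Inf S \<le> s"
    by (auto intro: closed_contains_Inf cInf_lower)
  thus ?thesis using that[of "Inf S"] by (force simp: S_def not_le)
qed

lemma has_real_derivative_vec_nth:
  fixes f :: "real \<Rightarrow> real^'d"
  assumes "(f has_vector_derivative f') F"
  shows "((\<lambda>x. f x $ j) has_real_derivative f' $ j) F"
proof -
  have "((\<lambda>x. f x $ j) has_derivative (\<lambda>x. (x *\<^sub>R f') $ j)) F"
    by (rule bounded_linear.has_derivative[OF bounded_linear_vec_nth assms[unfolded has_vector_derivative_def]])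
  moreover have "(\<lambda>x. (x *\<^sub>R f') $ j) = (*) (f' $ j)" by (auto simp: mult.commute)
  ultimately show ?thesis by (simp add: has_field_derivative_def)
qed

section \<open>A smoothed l1 norm\<close>

lemma norm_le_l1norm: "norm x \<le> l1norm x"
  unfolding l1norm_def by (rule norm_le_l1_cart)

lemma abs_vec_nth_le_l1norm: "\<bar>x $ j\<bar> \<le> l1norm x"
  unfolding l1norm_def by (rule member_le_sum) auto

lemma continuous_on_l1norm: "continuous_on UNIV (l1norm :: real^'d \<Rightarrow> real)"
  unfolding l1norm_def[abs_def] by (intro continuous_intros)

definition smooth_l1norm :: "real \<Rightarrow> real^'d \<Rightarrow> real" where
  "smooth_l1norm \<gamma> x = (\<Sum>j\<in>UNIV. sqrt ((x $ j)\<^sup>2 + \<gamma>\<^sup>2))"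

lemma l1norm_le_smooth_l1norm: "l1norm x \<le> smooth_l1norm \<gamma> x"
  unfolding l1norm_def smooth_l1norm_def by (intro sum_mono) (simp add: real_le_rsqrt)

lemma card_mult_le_smooth_l1norm:
  "0 \<le> \<gamma> \<Longrightarrow> real CARD('d) * \<gamma> \<le> smooth_l1norm \<gamma> (x :: real^'d)"
  using sum_mono[of UNIV "\<lambda>_. \<gamma>" "\<lambda>j. sqrt ((x $ j)\<^sup>2 + \<gamma>\<^sup>2)"]
  by (simp add: smooth_l1norm_def real_le_rsqrt)

lemma smooth_l1norm_0: "0 \<le> \<gamma> \<Longrightarrow> smooth_l1norm \<gamma> (0 :: real^'d) = real CARD('d) * \<gamma>"
  by (simp add: smooth_l1norm_def)

lemma continuous_on_smooth_l1norm: "continuous_on UNIV (smooth_l1norm \<gamma> :: real^'d \<Rightarrow> real)"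
  unfolding smooth_l1norm_def[abs_def] by (intro continuous_intros)

lemma has_real_derivative_smooth_l1norm:
  fixes Z :: "real \<Rightarrow> real^'d"
  assumes \<gamma>: "\<gamma> > 0" and Z: "(Z has_vector_derivative z) (at s within S)"
  shows "((\<lambda>u. smooth_l1norm \<gamma> (Z u)) has_real_derivative
           (\<Sum>j\<in>UNIV. Z s $ j * z $ j / sqrt ((Z s $ j)\<^sup>2 + \<gamma>\<^sup>2))) (at s within S)"
  unfolding smooth_l1norm_def
proof (intro DERIV_sum)
  fix j
  have pos: "0 < (Z s $ j)\<^sup>2 + \<gamma>\<^sup>2" using \<gamma> by (simp add: add_nonneg_pos)
  have "((\<lambda>u. (Z u $ j)\<^sup>2 + \<gamma>\<^sup>2) has_real_derivative 2 * Z s $ j * z $ j) (at s within S)"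
    by (auto intro!: derivative_eq_intros has_real_derivative_vec_nth[OF Z])
  from DERIV_chain2[OF DERIV_real_sqrt[OF pos] this]
  show "((\<lambda>u. sqrt ((Z u $ j)\<^sup>2 + \<gamma>\<^sup>2)) has_real_derivative
          Z s $ j * z $ j / sqrt ((Z s $ j)\<^sup>2 + \<gamma>\<^sup>2)) (at s within S)"
    by (simp add: field_simps)
qed

lemma smooth_l1norm_drift_le:
  fixes b B :: "real^'d \<Rightarrow> real^'d"
  assumes rho: "osgood_class \<rho>" and Cb: "cond_Cb \<rho> b" and \<gamma>: "\<gamma> > 0"
    and c: "norm (B x - b x) \<le> c"
  shows "(\<Sum>j\<in>UNIV. (x - y) $ j * (B x - b y) $ j / sqrt (((x - y) $ j)\<^sup>2 + \<gamma>\<^sup>2))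
           \<le> real CARD('d) * (\<rho> (smooth_l1norm \<gamma> (x - y)) + c)"
proof -
  define v where "v = smooth_l1norm \<gamma> (x - y)"
  have c0: "0 \<le> c" using c norm_ge_zero order.trans by blast
  have "0 < real CARD('d) * \<gamma>" using \<gamma> by simp
  hence v: "0 < v" using card_mult_le_smooth_l1norm[of \<gamma> "x - y"] \<gamma> unfolding v_def by linarith
  hence \<rho>v: "0 < \<rho> v" using rho by (simp add: osgood_class_def)
  have component: "z * (B x - b y) $ j / q \<le> \<rho> v + c"
    if z: "z = (x - y) $ j" and q: "q = sqrt (z\<^sup>2 + \<gamma>\<^sup>2)" for z q j
  proof -
    have q: "0 < q" "\<bar>z\<bar> \<le> q" using q \<gamma> by (auto simp: real_le_rsqrt add_nonneg_pos)
    have "\<bar>(B x - b x) $ j\<bar> \<le> c" using component_le_norm_cart[of "B x - b x" j] c by linarith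
    hence "\<bar>z\<bar> * \<bar>(B x - b x) $ j\<bar> \<le> \<bar>z\<bar> * c" by (intro mult_left_mono) auto
    moreover have "z * (B x - b x) $ j \<le> \<bar>z\<bar> * \<bar>(B x - b x) $ j\<bar>" by (metis abs_ge_self abs_mult)
    ultimately have "z * (B x - b x) $ j \<le> \<bar>z\<bar> * c" by linarith
    moreover have "z * (b x - b y) $ j \<le> \<bar>z\<bar> * \<rho> v"
    proof (cases "z = 0")
      case False
      hence "0 < l1norm (x - y)" using abs_vec_nth_le_l1norm[of "x - y" j] z by linarith
      hence "\<rho> (l1norm (x - y)) \<le> \<rho> v"
        using rho l1norm_le_smooth_l1norm[of "x - y" \<gamma>] by (auto simp: osgood_class_def mono_on_def v_def)
      moreover have "z * (b x - b y) $ j \<le> \<bar>z\<bar> * \<rho> (l1norm (x - y))"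
        using Cb z by (simp add: cond_Cb_def)
      ultimately show ?thesis by (smt (verit) abs_ge_zero mult_left_mono)
    qed simp
    ultimately have "z * (B x - b y) $ j \<le> \<bar>z\<bar> * (\<rho> v + c)" by (simp add: algebra_simps)
    also have "\<dots> \<le> q * (\<rho> v + c)" using q \<rho>v c0 by (intro mult_right_mono) auto
    finally show ?thesis using q by (simp add: divide_le_eq mult.commute)
  qed
  hence "(\<Sum>j\<in>UNIV. (x - y) $ j * (B x - b y) $ j / sqrt (((x - y) $ j)\<^sup>2 + \<gamma>\<^sup>2))
           \<le> (\<Sum>j\<in>(UNIV::'d set). \<rho> v + c)"
    by (intro sum_mono component[OF refl refl])
  thus ?thesis by (simp add: v_def)
qed

section \<open>The Osgood comparison\<close>

lemma integral_reciprocal_le_of_right_derivative: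
  fixes G v v' :: "real \<Rightarrow> real"
  assumes Gc: "continuous_on {0<..} G" and Gpos: "\<And>r. 0 < r \<Longrightarrow> 0 < G r"
    and T: "0 \<le> T" and c: "0 < c" and vc: "continuous_on {0..T} v" and vge: "\<And>s. s \<in> {0..T} \<Longrightarrow> c \<le> v s"
    and vd: "\<And>s. 0 \<le> s \<Longrightarrow> s < T \<Longrightarrow> (v has_real_derivative v' s) (at s within {s..T})"
    and v'le: "\<And>s. 0 \<le> s \<Longrightarrow> s < T \<Longrightarrow> v' s \<le> G (v s)"
  shows "integral {v 0..v T} (\<lambda>r. 1 / G r) \<le> T"
proof -
  define f where "f = (\<lambda>r. 1 / G r)"
  define F where "F = (\<lambda>x. integral {c / 2..x} f)"
  have fc: "continuous_on {u..w} f" if "0 < u" for u w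
  proof -
    have "G r \<noteq> 0" if "r \<in> {u..w}" for r using Gpos[of r] that \<open>0 < u\<close> by auto
    thus ?thesis unfolding f_def using \<open>0 < u\<close>
      by (intro continuous_intros continuous_on_subset[OF Gc]) auto
  qed
  have Fd: "(F has_real_derivative f x) (at x)" if x: "c / 2 < x" for x
  proof -
    have "(F has_real_derivative f x) (at x within {c / 2..x + 1})"
      unfolding F_def by (rule integral_has_real_derivative) (use fc c x in auto)
    thus ?thesis using x by (simp add: at_within_Icc_at)
  qed
  have "(F \<circ> v) T - (F \<circ> v) 0 \<le> 1 * (T - 0)"
  proof (rule increment_le_of_right_derivative_le[OF T])
    show "continuous_on {0..T} (F \<circ> v)"
      using Fd vge c by (intro continuous_on_compose[OF vc] continuous_at_imp_continuous_on)
                        (force intro: DERIV_isCont)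
    fix s assume s: "0 \<le> s" "s < T"
    have "c / 2 < v s" using vge[of s] s c by auto
    from DERIV_chain[OF Fd[OF this] vd[OF s]]
    have "(F \<circ> v has_real_derivative f (v s) * v' s) (at s within {s..T})" .
    moreover have "f (v s) * v' s \<le> 1"
      using v'le[OF s] Gpos[of "v s"] \<open>c / 2 < v s\<close> c by (simp add: f_def divide_le_eq)
    ultimately show "\<exists>D. (F \<circ> v has_real_derivative D) (at s within {s..T}) \<and> D \<le> 1" by blast
  qed
  moreover have "F (v T) - F (v 0) = integral {v 0..v T} f" if "v 0 \<le> v T"
    using Henstock_Kurzweil_Integration.integral_combine[of "c / 2" "v 0" "v T" f] vge[of 0] T c that
      integrable_continuous_real[OF fc[of "c / 2" "v T"]]
    by (simp add: F_def)
  moreover have "integral {v 0..v T} f = 0" if "v T < v 0" using that by simp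
  ultimately show ?thesis using T by (fastforce simp: f_def)
qed

lemma integrable_reciprocal_osgood:
  assumes rho: "osgood_class \<rho>" and a: "0 < a" and c: "0 \<le> c"
  shows "(\<lambda>r. 1 / (\<rho> r + c)) integrable_on {a..w}"
proof (rule integrable_continuous_real)
  have "continuous_on {a..w} \<rho>"
    using rho a by (auto simp: osgood_class_def elim!: continuous_on_subset)
  moreover have "\<rho> r + c \<noteq> 0" if "r \<in> {a..w}" for r
  proof -
    have "0 < \<rho> r" using rho a that by (simp add: osgood_class_def)
    thus ?thesis using c by linarith
  qed
  ultimately show "continuous_on {a..w} (\<lambda>r. 1 / (\<rho> r + c))" by (intro continuous_intros) auto
qed

lemma integral_reciprocal_osgood_le:
  assumes rho: "osgood_class \<rho>" and a: "0 < a" "\<eta> \<le> w" and c: "0 \<le> c" "c \<le> \<rho> a"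
  shows "integral {a..\<eta>} (\<lambda>r. 1 / \<rho> r) \<le> 2 * integral {a..w} (\<lambda>r. 1 / (\<rho> r + c))"
proof -
  have int: "(\<lambda>r. 1 / (\<rho> r + c')) integrable_on {a..w'}" if "0 \<le> c'" for c' w'
    by (rule integrable_reciprocal_osgood[OF rho a(1) that])
  have "integral {a..\<eta>} (\<lambda>r. 1 / \<rho> r) \<le> integral {a..\<eta>} (\<lambda>r. 2 * (1 / (\<rho> r + c)))"
  proof (rule integral_le)
    show "(\<lambda>r. 1 / \<rho> r) integrable_on {a..\<eta>}" using int[of 0] by simp
    show "(\<lambda>r. 2 * (1 / (\<rho> r + c))) integrable_on {a..\<eta>}"
      using integrable_on_cmult_left[OF int[OF c(1)], of 2] by simp
    fix r assume r: "r \<in> {a..\<eta>}"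
    hence "c \<le> \<rho> r" "0 < \<rho> r"
      using rho a c by (auto simp: osgood_class_def mono_on_def intro: order.trans)
    thus "1 / \<rho> r \<le> 2 * (1 / (\<rho> r + c))" using c(1) by (simp add: field_simps)
  qed
  also have "\<dots> = 2 * integral {a..\<eta>} (\<lambda>r. 1 / (\<rho> r + c))"
    by (rule integral_mult_right)
  also have "\<dots> \<le> 2 * integral {a..w} (\<lambda>r. 1 / (\<rho> r + c))"
    using rho a c int[OF c(1)]
    by (intro mult_left_mono integral_subset_le) (auto simp: osgood_class_def add_pos_nonneg less_imp_le)
  finally show ?thesis .
qed

lemma osgood_class_exists_gap:
  assumes rho: "osgood_class \<rho>" and \<eta>: "0 < \<eta>" "\<eta> \<le> 1"
  obtains a where "0 < a" "a < \<eta>" "K < integral {a..\<eta>} (\<lambda>r. 1 / \<rho> r)"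
proof -
  have "\<forall>\<^sub>F e in at_right 0. K + integral {\<eta>..1} (\<lambda>r. 1 / \<rho> r) < integral {e..1} (\<lambda>r. 1 / \<rho> r)"
    using rho unfolding osgood_class_def filterlim_at_top_dense by blast
  moreover have "\<forall>\<^sub>F e in at_right 0. 0 < e \<and> e < \<eta>"
    using \<eta> unfolding eventually_at_right_field by blast
  ultimately have "\<forall>\<^sub>F e in at_right 0. (0 < e \<and> e < \<eta>) \<and>
      K + integral {\<eta>..1} (\<lambda>r. 1 / \<rho> r) < integral {e..1} (\<lambda>r. 1 / \<rho> r)"
    by (rule eventually_conj[rotated])
  then obtain a where a: "0 < a" "a < \<eta>"
    and big: "K + integral {\<eta>..1} (\<lambda>r. 1 / \<rho> r) < integral {a..1} (\<lambda>r. 1 / \<rho> r)"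
    using eventually_happens'[of "at_right (0::real)"] by auto
  have "integral {a..1} (\<lambda>r. 1 / \<rho> r) = integral {a..\<eta>} (\<lambda>r. 1 / \<rho> r) + integral {\<eta>..1} (\<lambda>r. 1 / \<rho> r)"
    using Henstock_Kurzweil_Integration.integral_combine[of a \<eta> 1 "\<lambda>r. 1 / \<rho> r"] a \<eta>
      integrable_reciprocal_osgood[OF rho a(1), of 0 1] by simp
  hence "K < integral {a..\<eta>} (\<lambda>r. 1 / \<rho> r)" using big by linarith
  thus ?thesis by (rule that[OF a])
qed

lemma integral_reciprocal_smooth_l1norm_le:
  fixes b B :: "real^'d \<Rightarrow> real^'d" and Xf Yf :: "real \<Rightarrow> real^'d"
  assumes rho: "osgood_class \<rho>" and Cb: "cond_Cb \<rho> b" and \<gamma>: "0 < \<gamma>" and c: "0 \<le> c" and T: "0 \<le> T"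
    and Zc: "continuous_on {0..T} (\<lambda>s. Xf s - Yf s)"
    and Zd: "\<And>s. 0 \<le> s \<Longrightarrow> s < T \<Longrightarrow>
       ((\<lambda>s. Xf s - Yf s) has_vector_derivative B (Xf s) - b (Yf s)) (at s within {s..T})"
    and B: "\<And>s. 0 \<le> s \<Longrightarrow> s < T \<Longrightarrow> norm (B (Xf s) - b (Xf s)) \<le> c"
  shows "integral {smooth_l1norm \<gamma> (Xf 0 - Yf 0)..smooth_l1norm \<gamma> (Xf T - Yf T)}
           (\<lambda>r. 1 / (real CARD('d) * (\<rho> r + c))) \<le> T"
proof -
  define Z where "Z = (\<lambda>s. Xf s - Yf s)"
  define D where "D = real CARD('d)"
  define v where "v = (\<lambda>s. smooth_l1norm \<gamma> (Z s))"
  define v' where "v' = (\<lambda>s. \<Sum>j\<in>UNIV. Z s $ j * (B (Xf s) - b (Yf s)) $ j / sqrt ((Z s $ j)\<^sup>2 + \<gamma>\<^sup>2))"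
  have D: "0 < D" by (simp add: D_def)
  have "integral {v 0..v T} (\<lambda>r. 1 / (D * (\<rho> r + c))) \<le> T"
  proof (rule integral_reciprocal_le_of_right_derivative[where v' = v' and c = "D * \<gamma>"])
    show "continuous_on {0<..} (\<lambda>r. D * (\<rho> r + c))"
      using rho by (auto simp: osgood_class_def intro!: continuous_intros)
    show "0 < D * (\<rho> r + c)" if "0 < r" for r
      using rho D c that by (simp add: osgood_class_def add_pos_nonneg)
    show "continuous_on {0..T} v" unfolding v_def Z_def
      by (rule continuous_on_compose2[OF continuous_on_smooth_l1norm Zc]) auto
    show "D * \<gamma> \<le> v s" for s
      using card_mult_le_smooth_l1norm[of \<gamma> "Z s"] \<gamma> by (simp add: v_def D_def)
    fix s assume s: "0 \<le> s" "s < T"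
    show "(v has_real_derivative v' s) (at s within {s..T})"
      unfolding v_def v'_def using Zd[OF s] unfolding Z_def[symmetric]
      by (rule has_real_derivative_smooth_l1norm[OF \<gamma>])
    from smooth_l1norm_drift_le[of \<rho> b \<gamma> B "Xf s" c "Yf s", OF rho Cb \<gamma> B[OF s]]
    show "v' s \<le> D * (\<rho> (v s) + c)" by (simp add: v'_def v_def Z_def D_def)
  qed (use T D \<gamma> in auto)
  thus ?thesis by (simp add: v_def Z_def D_def)
qed

lemma l1norm_difference_less:
  fixes b B :: "real^'d \<Rightarrow> real^'d" and Xf Yf :: "real \<Rightarrow> real^'d"
  assumes rho: "osgood_class \<rho>" and Cb: "cond_Cb \<rho> b" and t: "0 \<le> t"
    and Zc: "continuous_on {0..t} (\<lambda>s. Xf s - Yf s)" and Z0: "Xf 0 = Yf 0"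
    and Zd: "\<And>s. 0 \<le> s \<Longrightarrow> s < t \<Longrightarrow>
       ((\<lambda>s. Xf s - Yf s) has_vector_derivative B (Xf s) - b (Yf s)) (at s within {s..t})"
    and a: "0 < a" "a < \<eta>" and c: "0 \<le> c" "c \<le> \<rho> a"
    and B: "\<And>s. s \<in> {0..t} \<Longrightarrow> l1norm (Xf s - Yf s) < \<eta> \<Longrightarrow> norm (B (Xf s) - b (Xf s)) \<le> c"
    and gap: "2 * real CARD('d) * t < integral {a..\<eta>} (\<lambda>r. 1 / \<rho> r)"
  shows "l1norm (Xf t - Yf t) < \<eta>"
proof (rule ccontr)
  define D where "D = real CARD('d)"
  \<comment> \<open>l1norm is not differentiable where a component vanishes; its smoothing is,
    and it starts at exactly a\<close>
  define \<gamma> where "\<gamma> = a / D"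
  have D: "0 < D" and \<gamma>: "0 < \<gamma>" using a by (auto simp: D_def \<gamma>_def)
  assume "\<not> l1norm (Xf t - Yf t) < \<eta>"
  moreover have "continuous_on {0..t} (\<lambda>s. l1norm (Xf s - Yf s))"
    by (rule continuous_on_compose2[OF continuous_on_l1norm Zc]) auto
  ultimately obtain \<tau> where \<tau>: "\<tau> \<in> {0..t}" "\<eta> \<le> l1norm (Xf \<tau> - Yf \<tau>)"
    and before: "\<And>s. 0 \<le> s \<Longrightarrow> s < \<tau> \<Longrightarrow> l1norm (Xf s - Yf s) < \<eta>"
    using first_hitting_time[of t "\<lambda>s. l1norm (Xf s - Yf s)" \<eta>] t by (auto simp: not_less)
  define w where "w = smooth_l1norm \<gamma> (Xf \<tau> - Yf \<tau>)"
  have "integral {smooth_l1norm \<gamma> (Xf 0 - Yf 0)..w} (\<lambda>r. 1 / (D * (\<rho> r + c))) \<le> \<tau>"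
    unfolding w_def D_def
  proof (rule integral_reciprocal_smooth_l1norm_le[OF rho Cb \<gamma> c(1)])
    show "continuous_on {0..\<tau>} (\<lambda>s. Xf s - Yf s)" by (rule continuous_on_subset[OF Zc]) (use \<tau> in auto)
    fix s assume s: "0 \<le> s" "s < \<tau>"
    show "((\<lambda>s. Xf s - Yf s) has_vector_derivative B (Xf s) - b (Yf s)) (at s within {s..\<tau>})"
      by (rule has_vector_derivative_within_subset[OF Zd]) (use s \<tau> in auto)
    show "norm (B (Xf s) - b (Xf s)) \<le> c" using B before s \<tau> by simp
  qed (use \<tau> in auto)
  moreover have "smooth_l1norm \<gamma> (Xf 0 - Yf 0) = a"
    using Z0 less_imp_le[OF \<gamma>] D by (simp add: smooth_l1norm_0 D_def[symmetric] \<gamma>_def)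
  moreover have "\<eta> \<le> w" using \<tau> l1norm_le_smooth_l1norm[of "Xf \<tau> - Yf \<tau>" \<gamma>] by (simp add: w_def)
  moreover have "integral {a..w} (\<lambda>r. 1 / (D * (\<rho> r + c))) = integral {a..w} (\<lambda>r. 1 / (\<rho> r + c)) / D"
    using integral_divide[of "{a..w}" "\<lambda>r. 1 / (\<rho> r + c)" D] by (simp add: mult.commute)
  ultimately have "integral {a..w} (\<lambda>r. 1 / (\<rho> r + c)) / D \<le> t" using \<tau> by simp
  moreover have "integral {a..\<eta>} (\<lambda>r. 1 / \<rho> r) \<le> 2 * integral {a..w} (\<lambda>r. 1 / (\<rho> r + c))"
    using integral_reciprocal_osgood_le[OF rho a(1) \<open>\<eta> \<le> w\<close> c] .
  ultimately show False using gap D unfolding D_def by (simp add: divide_le_eq mult.commute)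
qed

section \<open>Integral equations driven by a right-continuous path\<close>

lemma integral_equation_solution_eq:
  fixes G :: "'a::euclidean_space \<Rightarrow> 'a" and X V :: "real \<Rightarrow> 'a"
  assumes "\<forall>u\<ge>0. ((\<lambda>r. G (X r)) has_integral (X u - x0 - V u)) {0..u}" "0 \<le> u"
  shows "X u = x0 + V u + integral {0..u} (\<lambda>r. G (X r))"
proof -
  have "integral {0..u} (\<lambda>r. G (X r)) = X u - x0 - V u" using assms by (simp add: integral_unique)
  thus ?thesis by (simp add: algebra_simps)
qed

lemma integral_equation_right_derivative:
  fixes G :: "'a::euclidean_space \<Rightarrow> 'a" and X V :: "real \<Rightarrow> 'a"
  assumes G: "continuous_on UNIV G" and V: "\<And>s. 0 \<le> s \<Longrightarrow> continuous (at_right s) V"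
    and eq: "\<forall>u\<ge>0. ((\<lambda>r. G (X r)) has_integral (X u - x0 - V u)) {0..u}" and s: "0 \<le> s" "s < t"
  shows "((\<lambda>u. integral {0..u} (\<lambda>r. G (X r))) has_vector_derivative G (X s)) (at s within {s..t})"
proof -
  define f where "f = (\<lambda>r. G (X r))"
  have fi: "f integrable_on {0..t}" using eq[rule_format, of t] s unfolding f_def by auto
  have "continuous (at s within {s..t}) (\<lambda>u. x0 + V u + integral {0..u} f)"
  proof (intro continuous_intros)
    show "continuous (at s within {s..t}) V"
      using V[OF s(1)] by (auto intro: continuous_within_subset simp: at_within_Ici_at_right[symmetric])
    show "continuous (at s within {s..t}) (\<lambda>u. integral {0..u} f)"
    proof (rule continuous_within_subset)
      show "continuous (at s within {0..t}) (\<lambda>u. integral {0..u} f)"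
        using indefinite_integral_continuous_1[OF fi] s by (simp add: continuous_on_eq_continuous_within)
    qed (use s in auto)
  qed
  \<comment> \<open>V is only right-continuous, hence so are X and the integrand\<close>
  hence "continuous (at s within {s..t}) X"
    by (rule continuous_transform_within[OF _ zero_less_one])
       (use integral_equation_solution_eq[OF eq] s in \<open>auto simp: f_def\<close>)
  hence "continuous (at s within {s..t}) f"
    unfolding f_def using G by (auto intro: continuous_within_compose3 simp: continuous_on_eq_continuous_at)
  moreover have "f integrable_on {s..t}" by (rule integrable_on_subinterval[OF fi]) (use s in auto)
  ultimately have d: "((\<lambda>u. integral {0..s} f + integral {s..u} f) has_vector_derivative f s) (at s within {s..t})"
    using integral_has_vector_derivative_continuous_at[of f s t s "{}"] s
    by (auto intro!: derivative_eq_intros)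
  have comb: "integral {0..u} f = integral {0..s} f + integral {s..u} f" if "u \<in> {s..t}" for u
    using Henstock_Kurzweil_Integration.integral_combine[of 0 s u f] that s
      integrable_on_subinterval[OF fi, of 0 u] by auto
  show ?thesis using has_vector_derivative_transform[OF _ comb d] s unfolding f_def by auto
qed

lemma integral_equation_solutions_diff:
  fixes G1 G2 :: "'a::euclidean_space \<Rightarrow> 'a" and X1 X2 V :: "real \<Rightarrow> 'a"
  assumes G1: "continuous_on UNIV G1" and G2: "continuous_on UNIV G2"
    and V: "\<And>s. 0 \<le> s \<Longrightarrow> continuous (at_right s) V"
    and eq1: "\<forall>u\<ge>0. ((\<lambda>r. G1 (X1 r)) has_integral (X1 u - x0 - V u)) {0..u}"
    and eq2: "\<forall>u\<ge>0. ((\<lambda>r. G2 (X2 r)) has_integral (X2 u - x0 - V u)) {0..u}"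
    and t: "0 \<le> t"
  shows "continuous_on {0..t} (\<lambda>s. X1 s - X2 s)"
    and "X1 0 = X2 0"
    and "\<And>s. 0 \<le> s \<Longrightarrow> s < t \<Longrightarrow>
           ((\<lambda>s. X1 s - X2 s) has_vector_derivative G1 (X1 s) - G2 (X2 s)) (at s within {s..t})"
proof -
  define I where "I = (\<lambda>u. integral {0..u} (\<lambda>r. G1 (X1 r)) - integral {0..u} (\<lambda>r. G2 (X2 r)))"
  have diff: "X1 u - X2 u = I u" if "0 \<le> u" for u
    using integral_equation_solution_eq[OF eq1 that] integral_equation_solution_eq[OF eq2 that]
    by (simp add: I_def)
  have "continuous_on {0..t} I" unfolding I_def
    using eq1[rule_format, OF t] eq2[rule_format, OF t]
    by (intro continuous_on_diff indefinite_integral_continuous_1) auto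
  thus "continuous_on {0..t} (\<lambda>s. X1 s - X2 s)"
    by (rule continuous_on_eq) (simp add: diff)
  show "X1 0 = X2 0" using diff[of 0] by (simp add: I_def)
  fix s assume s: "0 \<le> s" "s < t"
  have "(I has_vector_derivative G1 (X1 s) - G2 (X2 s)) (at s within {s..t})" unfolding I_def
    using integral_equation_right_derivative[OF G1 V eq1 s] integral_equation_right_derivative[OF G2 V eq2 s]
    by (rule has_vector_derivative_diff)
  thus "((\<lambda>s. X1 s - X2 s) has_vector_derivative G1 (X1 s) - G2 (X2 s)) (at s within {s..t})"
    by (rule has_vector_derivative_transform[rotated 2]) (use s diff in auto)
qed

lemma bounded_integral_equation_solution:
  fixes G :: "'a::euclidean_space \<Rightarrow> 'a" and X V :: "real \<Rightarrow> 'a"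
  assumes eq: "\<forall>u\<ge>0. ((\<lambda>r. G (X r)) has_integral (X u - x0 - V u)) {0..u}"
    and t: "0 \<le> t" and V: "bounded (V ` {0..t})"
  shows "bounded (X ` {0..t})"
proof -
  have "continuous_on {0..t} (\<lambda>u. integral {0..u} (\<lambda>r. G (X r)))"
    using eq[rule_format, OF t] by (intro indefinite_integral_continuous_1) auto
  hence "bounded ((\<lambda>u. integral {0..u} (\<lambda>r. G (X r))) ` {0..t})"
    by (intro compact_imp_bounded compact_continuous_image) auto
  hence "bounded ((\<lambda>u. x0 + V u + integral {0..u} (\<lambda>r. G (X r))) ` {0..t})"
    using V by (intro bounded_plus_comp) (auto simp: image_constant_conv)
  moreover have "X ` {0..t} = (\<lambda>u. x0 + V u + integral {0..u} (\<lambda>r. G (X r))) ` {0..t}"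
    using integral_equation_solution_eq[OF eq] by (intro image_cong) auto
  ultimately show ?thesis by simp
qed

lemma continuous_at_right_time_changed:
  fixes l :: "real \<Rightarrow> real^'d" and W :: "'w \<Rightarrow> real \<Rightarrow> real^'d"
  assumes l: "l \<in> subord_paths" and W: "continuous_on {0..} (W \<omega>)" and s: "0 \<le> s"
  shows "continuous (at_right s) (time_changed W l \<omega>)"
proof -
  have lnn: "\<And>u j. u \<ge> 0 \<Longrightarrow> l u $ j \<ge> 0" and lrc: "continuous (at_right s) l"
    using l s unfolding subord_paths_def by blast+
  have "continuous (at_right s) (\<lambda>u. W \<omega> (l u $ j) $ j)" for j
  proof -
    have "continuous (at (l s $ j) within {0..}) (W \<omega>)"
      using W lnn[OF s, of j] continuous_on_eq_continuous_within by auto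
    hence "continuous (at (l s $ j) within (\<lambda>u. l u $ j) ` {s<..}) (W \<omega>)"
      by (rule continuous_within_subset) (use lnn s in auto)
    from continuous_within_compose2[OF continuous_component[OF lrc] this]
    show ?thesis by (rule continuous_component)
  qed
  thus ?thesis unfolding time_changed_def continuous_def
    by (intro tendsto_vec_lambda) (simp add: continuous_def)
qed

lemma bounded_time_changed:
  fixes l :: "real \<Rightarrow> real^'d" and W :: "'w \<Rightarrow> real \<Rightarrow> real^'d"
  assumes l: "l \<in> subord_paths" and W: "continuous_on {0..} (W \<omega>)"
  shows "bounded (time_changed W l \<omega> ` {0..t})"
proof -
  have lnn: "\<And>u j. u \<ge> 0 \<Longrightarrow> l u $ j \<ge> 0" and lm: "\<And>j. mono_on {0..} (\<lambda>u. l u $ j)"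
    using l unfolding subord_paths_def by blast+
  have "\<exists>B. \<forall>x\<in>{0..l t $ j}. norm (W \<omega> x) \<le> B" for j
    using compact_imp_bounded[OF compact_continuous_image[OF continuous_on_subset[OF W], of "{0..l t $ j}"]]
    unfolding bounded_iff by auto
  then obtain B where B: "\<And>j x. x \<in> {0..l t $ j} \<Longrightarrow> norm (W \<omega> x) \<le> B j" by metis
  have "norm (time_changed W l \<omega> s) \<le> (\<Sum>j\<in>UNIV. B j)" if s: "s \<in> {0..t}" for s
  proof -
    have "norm (time_changed W l \<omega> s) \<le> (\<Sum>j\<in>UNIV. \<bar>time_changed W l \<omega> s $ j\<bar>)"
      by (rule norm_le_l1_cart)
    also have "\<dots> \<le> (\<Sum>j\<in>UNIV. B j)"
    proof (rule sum_mono)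
      fix j
      have "l s $ j \<in> {0..l t $ j}" using lnn[of s j] lm[of j] s by (auto simp: mono_on_def)
      thus "\<bar>time_changed W l \<omega> s $ j\<bar> \<le> B j"
        using B component_le_norm_cart[of "W \<omega> (l s $ j)" j] by (force simp: time_changed_def)
    qed
    finally show ?thesis .
  qed
  thus ?thesis unfolding bounded_iff by blast
qed

section \<open>Convergence of the mollified solutions\<close>

lemma tendsto_mollified_solution:
  fixes b :: "real^'d \<Rightarrow> real^'d" and V Y :: "real \<Rightarrow> real^'d" and X :: "real \<Rightarrow> real \<Rightarrow> real^'d"
  assumes rho: "osgood_class \<rho>" and Cb: "cond_Cb \<rho> b" and \<phi>: "mollifier_kernel \<phi>" and t: "0 \<le> t"
    and V: "\<And>s. 0 \<le> s \<Longrightarrow> continuous (at_right s) V" and V_bounded: "bounded (V ` {0..t})"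
    and X: "\<And>\<epsilon>. \<epsilon> \<in> {0<..<1} \<Longrightarrow>
              \<forall>u\<ge>0. ((\<lambda>s. mollify b \<phi> \<epsilon> (X \<epsilon> s)) has_integral (X \<epsilon> u - x0 - V u)) {0..u}"
    and Y: "\<forall>u\<ge>0. ((\<lambda>s. b (Y s)) has_integral (Y u - x0 - V u)) {0..u}"
  shows "((\<lambda>\<epsilon>. norm (X \<epsilon> t - Y t)) \<longlongrightarrow> 0) (at_right 0)"
proof (rule tendstoI)
  fix e :: real assume e: "0 < e"
  define \<eta> where "\<eta> = min e 1"
  have b: "continuous_on UNIV b" using Cb by (simp add: cond_Cb_def)
  obtain a where a: "0 < a" "a < \<eta>" and gap: "2 * real CARD('d) * t < integral {a..\<eta>} (\<lambda>r. 1 / \<rho> r)"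
    using osgood_class_exists_gap[OF rho, of \<eta> "2 * real CARD('d) * t"] e by (auto simp: \<eta>_def)
  obtain R where R: "\<And>s. s \<in> {0..t} \<Longrightarrow> norm (Y s) \<le> R"
    using bounded_integral_equation_solution[OF Y t V_bounded] unfolding bounded_iff by blast
  have \<rho>a: "0 < \<rho> a" using rho a by (simp add: osgood_class_def)
  have "\<forall>\<^sub>F \<epsilon> in at_right 0. \<epsilon> \<in> {0<..<1::real}"
    unfolding eventually_at_right_field greaterThanLessThan_iff using zero_less_one by blast
  moreover note eventually_mollify_close[OF \<phi> b \<rho>a, of "R + 1"]
  ultimately show "\<forall>\<^sub>F \<epsilon> in at_right 0. dist (norm (X \<epsilon> t - Y t)) 0 < e"
  proof eventually_elim
    case (elim \<epsilon>)
    have G: "continuous_on UNIV (mollify b \<phi> \<epsilon>)" using continuous_on_mollify[OF \<phi> _ b] elim by simp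
    note diff = integral_equation_solutions_diff[OF G b V X[OF elim(1)] Y t, simplified]
    have "l1norm (X \<epsilon> t - Y t) < \<eta>"
    proof (rule l1norm_difference_less[where B = "mollify b \<phi> \<epsilon>",
                 OF rho Cb t diff a less_imp_le[OF \<rho>a] order_refl _ gap])
      fix s assume s: "s \<in> {0..t}" and "l1norm (X \<epsilon> s - Y s) < \<eta>"
      hence "norm (X \<epsilon> s - Y s) \<le> 1" using norm_le_l1norm[of "X \<epsilon> s - Y s"] by (simp add: \<eta>_def)
      hence "norm (X \<epsilon> s) \<le> R + 1" using R[OF s] norm_triangle_sub[of "X \<epsilon> s" "Y s"] by linarith
      thus "norm (mollify b \<phi> \<epsilon> (X \<epsilon> s) - b (X \<epsilon> s)) \<le> \<rho> a" using elim(2) by blast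
    qed
    thus ?case using norm_le_l1norm[of "X \<epsilon> t - Y t"] by (simp add: \<eta>_def)
  qed
qed

theorem lemma2p5:
  fixes \<rho> :: "real \<Rightarrow> real" and b :: "real^'d \<Rightarrow> real^'d" and l :: "real \<Rightarrow> real^'d"
    and \<phi> :: "real^'d \<Rightarrow> real" and M :: "'w measure" and W :: "'w \<Rightarrow> real \<Rightarrow> real^'d"
    and x0 :: "real^'d"
    and X :: "real \<Rightarrow> 'w \<Rightarrow> real \<Rightarrow> real^'d" and Y :: "'w \<Rightarrow> real \<Rightarrow> real^'d"
  assumes rho: "osgood_class \<rho>"
    and Cb: "cond_Cb \<rho> b"
    and ell: "l \<in> subord_paths"
    and phi_nonneg: "\<forall>x. \<phi> x \<ge> 0"
    and phi_smooth: "smooth_fun \<phi>"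
    and phi_supp: "\<forall>x. norm x > 1 \<longrightarrow> \<phi> x = 0"
    and phi_int: "(\<phi> has_integral 1) UNIV"
    and BM: "std_brownian_motion M W"
    and Xeps: "\<forall>\<epsilon>\<in>{0<..<1}. \<forall>\<omega>\<in>space M. \<forall>t\<ge>0.
       ((\<lambda>s. mollify b \<phi> \<epsilon> (X \<epsilon> \<omega> s)) has_integral
          (X \<epsilon> \<omega> t - x0 - time_changed W l \<omega> t)) {0..t}"
    and Xell: "\<forall>\<omega>\<in>space M. \<forall>t\<ge>0.
       ((\<lambda>s. b (Y \<omega> s)) has_integral (Y \<omega> t - x0 - time_changed W l \<omega> t)) {0..t}"
  shows "(\<forall>\<epsilon>\<in>{0<..<1}. cond_Cb \<rho> (mollify b \<phi> \<epsilon>)) \<and>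
         (\<forall>\<omega>\<in>space M. \<forall>t\<ge>0. ((\<lambda>\<epsilon>. norm (X \<epsilon> \<omega> t - Y \<omega> t)) \<longlongrightarrow> 0) (at_right 0))"
proof -
  obtain D :: "'d list \<Rightarrow> real^'d \<Rightarrow> real" where "D [] = \<phi>" "\<And>js. continuous_on UNIV (D js)"
    using phi_smooth unfolding smooth_fun_def by blast
  hence \<phi>: "mollifier_kernel \<phi>"
    using phi_nonneg phi_supp phi_int unfolding mollifier_kernel_def by metis
  have "((\<lambda>\<epsilon>. norm (X \<epsilon> \<omega> t - Y \<omega> t)) \<longlongrightarrow> 0) (at_right 0)" if \<omega>: "\<omega> \<in> space M" and t: "0 \<le> t" for \<omega> t
  proof (rule tendsto_mollified_solution[OF rho Cb \<phi> t])
    have "continuous_on {0..} (W \<omega>)" using BM \<omega> by (simp add: std_brownian_motion_def)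
    thus "\<And>s. 0 \<le> s \<Longrightarrow> continuous (at_right s) (time_changed W l \<omega>)"
      and "bounded (time_changed W l \<omega> ` {0..t})"
      using continuous_at_right_time_changed[OF ell] bounded_time_changed[OF ell] by auto
  qed (use Xeps Xell \<omega> in auto)
  thus ?thesis using cond_Cb_mollify[OF \<phi> _ Cb] by auto
qed

end
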